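(* Let $\rho\geqslant\sqrt7$, and set $c=\frac14(\rho+\rho^{-1})^2$, $d=\frac12(\rho^2-4-\rho^{-2})$. For an integer $n$ define $$A_n=\rho^{2n}-nc-2n-n^2d-(n|n|-|n|)d,\quad B_n=\rho^{-2n}-nc+2n+n^2d-(n|n|-|n|)d,\quad C_n=1-nc-(n|n|-|n|)d,$$ and the Hermitian form $Q_n(\xi,\zeta)=A_n|\xi|^2+B_n|\zeta|^2+2C_n\operatorname{Re}(\xi\bar\zeta)$ on $\mathbb C^2$. Then for every integer $n\neq0,1$ and all $\xi,\zeta\in\mathbb C$, $Q_n(\xi,\zeta)>0$ unless $\xi=\zeta=0$. *)

theory Defs
  imports Complex_Main
begin

definition cc :: "real \<Rightarrow> real" where
  "cc \<rho> = (1/4) * (\<rho> + inverse \<rho>)^2"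

definition dd :: "real \<Rightarrow> real" where
  "dd \<rho> = (1/2) * (\<rho>^2 - 4 - inverse \<rho> ^ 2)"

definition An :: "real \<Rightarrow> int \<Rightarrow> real" where
  "An \<rho> n = \<rho> powi (2*n) - of_int n * cc \<rho> - 2 * of_int n - (of_int n)^2 * dd \<rho>
     - of_int (n * \<bar>n\<bar> - \<bar>n\<bar>) * dd \<rho>"

definition Bn :: "real \<Rightarrow> int \<Rightarrow> real" where
  "Bn \<rho> n = \<rho> powi (-2*n) - of_int n * cc \<rho> + 2 * of_int n + (of_int n)^2 * dd \<rho>
     - of_int (n * \<bar>n\<bar> - \<bar>n\<bar>) * dd \<rho>"

definition Cn :: "real \<Rightarrow> int \<Rightarrow> real" where
  "Cn \<rho> n = 1 - of_int n * cc \<rho> - of_int (n * \<bar>n\<bar> - \<bar>n\<bar>) * dd \<rho>"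

definition Qn :: "real \<Rightarrow> int \<Rightarrow> complex \<Rightarrow> complex \<Rightarrow> real" where
  "Qn \<rho> n \<xi> \<zeta> = An \<rho> n * (cmod \<xi>)^2 + Bn \<rho> n * (cmod \<zeta>)^2
     + 2 * Cn \<rho> n * Re (\<xi> * cnj \<zeta>)"

end

theory Submission
  imports Defs
begin

(* Q_n(xi, zeta) = A|xi|^2 + B|zeta|^2 + 2C Re(xi conj zeta) is positive definite as soon as
   A > 0 and C^2 < AB, so everything reduces to these two inequalities for the coefficients.
   Writing r = rho^2 >= 7 and s = rho^-2 in (0, 1/7], the constants become
   c = (r + 2 + s)/4 and d = (r - 4 - s)/2, and for n = k >= 2 resp. n = -k <= -1 the
   coefficients are explicit polynomials in r, s, k.
   - For the small indices (n = 2, 3, -1, -2) we bound A, B from below and |C| from above by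
     polynomials in r alone; the resulting polynomial inequality is checked by substituting
     r = 7 + t, which turns it into a polynomial in t with positive coefficients.
   - For the large indices (n >= 4, n <= -3) the power r^k dominates: 7^(k-1)/k^3 is
     increasing, so r^k is at least a constant times k^3 r, which beats the quadratic growth
     of the remaining terms in k.
   The main theorem combines the two index ranges with the rewriting of A_n, B_n, C_n. *)

definition pos_definite :: "real \<Rightarrow> real \<Rightarrow> real \<Rightarrow> bool" where
  "pos_definite A B C \<longleftrightarrow> 0 < A \<and> C\<^sup>2 < A * B"

(* Positive definiteness criterion: completing the square, A (A a^2 + B b^2 - 2|C| a b)
   = (A a - |C| b)^2 + (AB - C^2) b^2, and |Re(x conj z)| <= |x| |z|. *)
lemma pos_definite_form_pos:
  fixes A B C :: real and x z :: complex
  assumes "pos_definite A B C" and "\<not> (x = 0 \<and> z = 0)"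
  shows "A * (cmod x)\<^sup>2 + B * (cmod z)\<^sup>2 + 2 * C * Re (x * cnj z) > 0"
proof -
  define a b where "a = cmod x" and "b = cmod z"
  have A: "A > 0" and disc: "C\<^sup>2 < A * B" using assms(1) by (auto simp: pos_definite_def)
  have "\<bar>Re (x * cnj z)\<bar> \<le> a * b"
    unfolding a_def b_def by (metis abs_Re_le_cmod complex_mod_cnj norm_mult)
  then have "\<bar>C * Re (x * cnj z)\<bar> \<le> \<bar>C\<bar> * (a * b)"
    by (simp add: abs_mult mult_left_mono)
  then have cross: "C * Re (x * cnj z) \<ge> - (\<bar>C\<bar> * (a * b))" by linarith
  have ab_pos: "a > 0 \<or> b > 0" using assms(2) by (auto simp: a_def b_def)
  have "A * (A * a\<^sup>2 + B * b\<^sup>2 - 2 * \<bar>C\<bar> * a * b) = (A * a - \<bar>C\<bar> * b)\<^sup>2 + (A * B - C\<^sup>2) * b\<^sup>2"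
    by (simp add: algebra_simps power2_eq_square)
  also have "\<dots> > 0"
  proof (cases "b = 0")
    case True
    with ab_pos A show ?thesis by simp
  next
    case False
    with disc have "(A * B - C\<^sup>2) * b\<^sup>2 > 0" by simp
    then show ?thesis using zero_le_power2[of "A * a - \<bar>C\<bar> * b"] by linarith
  qed
  finally have "A * a\<^sup>2 + B * b\<^sup>2 - 2 * \<bar>C\<bar> * a * b > 0"
    using A by (simp add: zero_less_mult_iff)
  with cross show ?thesis unfolding a_def b_def by linarith
qed

lemma pos_definite_by_bounds:
  fixes A B C a b \<gamma> :: real
  assumes "a \<le> A" "b \<le> B" "0 < a" "0 < b" "\<bar>C\<bar> \<le> \<gamma>" "\<gamma>\<^sup>2 < a * b"
  shows "pos_definite A B C"
proof -
  have "C\<^sup>2 \<le> \<gamma>\<^sup>2" using assms(5) by (metis abs_ge_zero power2_abs power_mono)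
  moreover have "a * b \<le> A * B" using assms(1-4) by (intro mult_mono) auto
  ultimately show ?thesis using assms unfolding pos_definite_def by linarith
qed

(* The ratio 7^(k-1) / k^3 is nondecreasing for k >= 2, since (1 + 1/m)^3 <= 7 for m >= 2. *)
lemma pow7_over_cube_mono:
  fixes k m :: nat
  assumes "2 \<le> k" "k \<le> m"
  shows "7 ^ (k - 1) * m ^ 3 \<le> 7 ^ (m - 1) * k ^ 3"
  using assms(2)
proof (induction m rule: dec_induct)
  case base
  show ?case by simp
next
  case (step m)
  have "m \<ge> 2" using assms step by linarith
  then have "(2 * (m + 1)) ^ 3 \<le> (3 * m) ^ 3" by (intro power_mono) auto
  then have "8 * (m + 1) ^ 3 \<le> 27 * m ^ 3" by (simp only: power_mult_distrib) simp
  then have "(m + 1) ^ 3 \<le> 7 * m ^ 3" by linarith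
  then have "7 ^ (k - 1) * (Suc m) ^ 3 \<le> 7 * (7 ^ (k - 1) * m ^ 3)" by simp
  also have "\<dots> \<le> 7 * (7 ^ (m - 1) * k ^ 3)" using step.IH by simp
  also have "\<dots> = 7 ^ (Suc m - 1) * k ^ 3" using \<open>m \<ge> 2\<close> by (simp add: power_eq_if)
  finally show ?case .
qed

lemma pow_ge_cube:
  fixes r :: real and j m :: nat
  assumes "7 \<le> r" "2 \<le> j" "j \<le> m"
  shows "7 ^ (j - 1) * real m ^ 3 * r \<le> real j ^ 3 * r ^ m"
proof -
  have "real (7 ^ (j - 1) * m ^ 3) \<le> real (7 ^ (m - 1) * j ^ 3)"
    using pow7_over_cube_mono[OF assms(2,3)] by (simp only: of_nat_le_iff)
  also have "\<dots> \<le> r ^ (m - 1) * real j ^ 3"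
    using power_mono[OF assms(1), of "m - 1"] by (simp add: mult_right_mono)
  finally have "7 ^ (j - 1) * real m ^ 3 * r \<le> r ^ (m - 1) * real j ^ 3 * r"
    using assms(1) by (intro mult_right_mono) auto
  also have "\<dots> = real j ^ 3 * r ^ m"
    using assms by (simp add: power_eq_if)
  finally show ?thesis .
qed

(* Polynomial inequalities for the four small indices, valid for r >= 7: after the
   substitution r = 7 + t the differences have only nonnegative coefficients in t. *)
lemma poly_plus_2:
  fixes r :: real assumes "7 \<le> r"
  shows "(3/2*r - 4)\<^sup>2 < (r\<^sup>2 - 7/2*r + 7) * ((r - 17/7)/2)"
proof -
  define t where "t = r - 7"
  have t: "0 \<le> t" and r: "r = 7 + t" using assms by (auto simp: t_def)
  have "(r\<^sup>2 - 7/2*r + 7) * ((r - 17/7)/2) - (3/2*r - 4)\<^sup>2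
      = 119/4 + 81/4*t + 37/7*t\<^sup>2 + 1/2*t^3"
    unfolding r by (simp add: field_simps power2_eq_square power3_eq_cube)
  moreover have "0 \<le> t\<^sup>2" "0 \<le> t^3" using t by simp_all
  ultimately show ?thesis using t by linarith
qed

lemma poly_plus_3:
  fixes r :: real assumes "7 \<le> r"
  shows "(15/4*r - 23/2)\<^sup>2 < (r^3 - 33/4*r + 45/2) * (3/4*(r - 17/7))"
proof -
  define t where "t = r - 7"
  have t: "0 \<le> t" and r: "r = 7 + t" using assms by (auto simp: t_def)
  have "(r^3 - 33/4*r + 45/2) * (3/4*(r - 17/7)) - (15/4*r - 23/2)\<^sup>2
      = 93809/112 + 66741/112*t + 162*t\<^sup>2 + 537/28*t^3 + 3/4*t^4"
    unfolding r by (simp add: field_simps power2_eq_square power3_eq_cube power4_eq_xxxx)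
  moreover have "0 \<le> t\<^sup>2" "0 \<le> t^3" "0 \<le> t^4" using t by simp_all
  ultimately show ?thesis using t by linarith
qed

lemma poly_minus_1:
  fixes r :: real assumes "7 \<le> r"
  shows "(5/4*r - 5/2)\<^sup>2 < ((3*r + 2)/4) * (11/4*r - 15/2 - 5/28)"
proof -
  define t where "t = r - 7"
  have t: "0 \<le> t" and r: "r = 7 + t" using assms by (auto simp: t_def)
  have "((3*r + 2)/4) * (11/4*r - 15/2 - 5/28) - (5/4*r - 5/2)\<^sup>2
      = 3077/112 + 993/112*t + 1/2*t\<^sup>2"
    unfolding r by (simp add: field_simps power2_eq_square)
  moreover have "0 \<le> t\<^sup>2" using t by simp
  ultimately show ?thesis using t by linarith
qed

lemma poly_minus_2:
  fixes r :: real assumes "7 \<le> r"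
  shows "(7/2*r - 10)\<^sup>2 < (3/2*r + 9/10) * (r\<^sup>2 + 11/2*r - 23 - 9/14)"
proof -
  define t where "t = r - 7"
  have t: "0 \<le> t" and r: "r = 7 + t" using assms by (auto simp: t_def)
  have "(3/2*r + 9/10) * (r\<^sup>2 + 11/2*r - 23 - 9/14) - (7/2*r - 10)\<^sup>2
      = 72481/140 + 15161/70*t + 142/5*t\<^sup>2 + 3/2*t^3"
    unfolding r by (simp add: field_simps power2_eq_square power3_eq_cube)
  moreover have "0 \<le> t\<^sup>2" "0 \<le> t^3" using t by simp_all
  ultimately show ?thesis using t by linarith
qed

(* From here on r = rho^2 and s = rho^-2 are abstracted to r >= 7 and 0 < s <= 1/7;
   the coefficients for n = k and n = -k are introduced as local abbreviations. *)
context
  fixes r s c d :: real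
  assumes r_ge: "7 \<le> r" and s_pos: "0 < s" and s_le: "s \<le> 1/7"
    and c_eq: "c = (r + 2 + s) / 4" and d_eq: "d = (r - 4 - s) / 2"
begin

abbreviation A_plus :: "nat \<Rightarrow> real" where
  "A_plus k \<equiv> r ^ k - real k * c - 2 * real k - (2 * (real k)\<^sup>2 - real k) * d"
abbreviation B_plus :: "nat \<Rightarrow> real" where
  "B_plus k \<equiv> s ^ k + real k * (d - c + 2)"
abbreviation C_plus :: "nat \<Rightarrow> real" where
  "C_plus k \<equiv> 1 - real k * c - ((real k)\<^sup>2 - real k) * d"

abbreviation A_minus :: "nat \<Rightarrow> real" where
  "A_minus k \<equiv> s ^ k + real k * (c + 2 + d)"
abbreviation B_minus :: "nat \<Rightarrow> real" where
  "B_minus k \<equiv> r ^ k + real k * c - 2 * real k + (2 * (real k)\<^sup>2 + real k) * d"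
abbreviation C_minus :: "nat \<Rightarrow> real" where
  "C_minus k \<equiv> 1 + real k * c + ((real k)\<^sup>2 + real k) * d"

lemma pos_definite_plus_2: "pos_definite (A_plus 2) (B_plus 2) (C_plus 2)"
proof (rule pos_definite_by_bounds)
  show "r\<^sup>2 - 7/2*r + 7 \<le> A_plus 2" using s_pos by (simp add: c_eq d_eq field_simps)
  have "(r - 17/7)/2 \<le> 2 * (d - c + 2)" using s_le by (simp add: c_eq d_eq field_simps)
  then show "(r - 17/7)/2 \<le> B_plus 2" by (simp add: add_increasing)
  show "\<bar>C_plus 2\<bar> \<le> 3/2*r - 4" using s_pos s_le r_ge by (simp add: c_eq d_eq field_simps)
  have "0 \<le> r * (r - 7/2)" using r_ge by simp
  then show "0 < r\<^sup>2 - 7/2*r + 7" by (simp add: power2_eq_square algebra_simps)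
  show "0 < (r - 17/7)/2" using r_ge by simp
  show "(3/2*r - 4)\<^sup>2 < (r\<^sup>2 - 7/2*r + 7) * ((r - 17/7)/2)" using poly_plus_2[OF r_ge] .
qed

lemma pos_definite_plus_3: "pos_definite (A_plus 3) (B_plus 3) (C_plus 3)"
proof (rule pos_definite_by_bounds)
  show "r^3 - 33/4*r + 45/2 \<le> A_plus 3" using s_pos by (simp add: c_eq d_eq field_simps)
  have "3/4*(r - 17/7) \<le> 3 * (d - c + 2)" using s_le by (simp add: c_eq d_eq field_simps)
  then show "3/4*(r - 17/7) \<le> B_plus 3" using s_pos by (simp add: add_increasing)
  show "\<bar>C_plus 3\<bar> \<le> 15/4*r - 23/2" using s_pos s_le r_ge by (simp add: c_eq d_eq field_simps)
  have "49 \<le> r\<^sup>2" using r_ge power_mono[of 7 r 2] by simp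
  then have "49 * r \<le> r\<^sup>2 * r" using r_ge by (intro mult_right_mono) auto
  moreover have "r^3 = r\<^sup>2 * r" by (simp add: power2_eq_square power3_eq_cube)
  ultimately show "0 < r^3 - 33/4*r + 45/2" using r_ge by linarith
  show "0 < 3/4*(r - 17/7)" using r_ge by simp
  show "(15/4*r - 23/2)\<^sup>2 < (r^3 - 33/4*r + 45/2) * (3/4*(r - 17/7))" using poly_plus_3[OF r_ge] .
qed

lemma pos_definite_minus_1: "pos_definite (A_minus 1) (B_minus 1) (C_minus 1)"
proof (rule pos_definite_by_bounds)
  show "(3*r + 2)/4 \<le> A_minus 1" using s_pos by (simp add: c_eq d_eq field_simps)
  show "11/4*r - 15/2 - 5/28 \<le> B_minus 1" using s_le by (simp add: c_eq d_eq field_simps)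
  show "\<bar>C_minus 1\<bar> \<le> 5/4*r - 5/2" using s_pos s_le r_ge by (simp add: c_eq d_eq field_simps)
  show "0 < (3*r + 2)/4" "0 < 11/4*r - 15/2 - 5/28" using r_ge by simp_all
  show "(5/4*r - 5/2)\<^sup>2 < ((3*r + 2)/4) * (11/4*r - 15/2 - 5/28)" using poly_minus_1[OF r_ge] .
qed

lemma pos_definite_minus_2: "pos_definite (A_minus 2) (B_minus 2) (C_minus 2)"
proof (rule pos_definite_by_bounds)
  have "3/2*r + 9/10 \<le> 2 * (c + 2 + d)" using s_le by (simp add: c_eq d_eq field_simps)
  then show "3/2*r + 9/10 \<le> A_minus 2" by (simp add: add_increasing)
  show "r\<^sup>2 + 11/2*r - 23 - 9/14 \<le> B_minus 2" using s_le by (simp add: c_eq d_eq field_simps)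
  show "\<bar>C_minus 2\<bar> \<le> 7/2*r - 10" using s_pos s_le r_ge by (simp add: c_eq d_eq field_simps)
  show "0 < 3/2*r + 9/10" using r_ge by simp
  show "0 < r\<^sup>2 + 11/2*r - 23 - 9/14" using r_ge zero_le_power2[of r] by linarith
  show "(7/2*r - 10)\<^sup>2 < (3/2*r + 9/10) * (r\<^sup>2 + 11/2*r - 23 - 9/14)" using poly_minus_2[OF r_ge] .
qed

lemma c_bounds: "9/4 \<le> c" "c \<le> r/3"
  using r_ge s_pos s_le by (simp_all add: c_eq)

lemma d_bounds: "0 \<le> d" "d \<le> r/2"
  using r_ge s_pos s_le by (simp_all add: d_eq)

(* Indices n = k >= 4: A >= 2 k^3 r because r^k >= 4 k^3 r, B >= k r/8, and
   C = 1 - X with 1 <= X <= k^2 r/2, so C^2 < (k^2 r/2)^2 = (2 k^3 r)(k r/8). *)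
lemma pos_definite_plus_large:
  assumes "4 \<le> k"
  shows "pos_definite (A_plus k) (B_plus k) (C_plus k)"
proof -
  define K where "K = real k"
  have K: "4 \<le> K" using assms by (simp add: K_def)
  have "343 * K^3 * r \<le> 64 * r^k"
    using pow_ge_cube[OF r_ge _ assms] by (simp add: K_def)
  moreover have P: "0 \<le> K^3 * r" using K r_ge by simp
  ultimately have pow: "4 * (K^3 * r) \<le> r^k" by linarith
  define X where "X = K * c + (K\<^sup>2 - K) * d"
  have KK: "0 \<le> K\<^sup>2 - K" using K by (simp add: power2_eq_square)
  have Kc: "K * c \<le> K * r / 3" using mult_left_mono[OF c_bounds(2), of K] K by simp
  have "(K\<^sup>2 - K) * d \<le> (K\<^sup>2 - K) * (r/2)" using d_bounds KK by (intro mult_left_mono) auto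
  moreover have "K * r / 3 + (K\<^sup>2 - K) * (r/2) \<le> K\<^sup>2 * r / 2"
    using K r_ge by (simp add: algebra_simps)
  ultimately have X_le: "X \<le> K\<^sup>2 * r / 2" using Kc unfolding X_def by linarith
  have "1 \<le> K * c" using c_bounds K mult_mono[of 1 K 1 c] by simp
  moreover have "0 \<le> (K\<^sup>2 - K) * d" using KK d_bounds by simp
  ultimately have X_ge: "1 \<le> X" unfolding X_def by linarith
  show ?thesis
  proof (rule pos_definite_by_bounds)
    have "(2 * K\<^sup>2 - K) * d \<le> (2 * K\<^sup>2 - K) * (r/2)"
      using d_bounds K by (intro mult_left_mono) (auto simp: power2_eq_square)
    moreover have "(2 * K\<^sup>2 - K) * (r/2) = K\<^sup>2 * r - K * r / 2" by (simp add: algebra_simps)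
    moreover have "K\<^sup>2 * r \<le> (K^3 * r) / 4" "K * r \<le> K\<^sup>2 * r" "2 * K \<le> K * r"
      using K r_ge by (simp_all add: power2_eq_square power3_eq_cube mult_right_mono)
    ultimately show "2 * (K^3 * r) \<le> A_plus k"
      using pow Kc P unfolding K_def[symmetric] by linarith
    have "K * (r/8) \<le> K * (d - c + 2)"
      using K r_ge s_le by (intro mult_left_mono) (auto simp: c_eq d_eq field_simps)
    then show "K * r / 8 \<le> B_plus k" using s_pos by (simp add: K_def add_increasing)
    show "\<bar>C_plus k\<bar> \<le> K\<^sup>2 * r / 2 - 1"
      using X_le X_ge by (simp add: X_def K_def)
    show "0 < 2 * (K^3 * r)" "0 < K * r / 8" using K r_ge by simp_all
    have "(K\<^sup>2 * r / 2 - 1)\<^sup>2 < (K\<^sup>2 * r / 2)\<^sup>2"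
      using X_le X_ge by (intro power_strict_mono) auto
    also have "\<dots> = 2 * (K^3 * r) * (K * r / 8)" by (simp add: power2_eq_square power3_eq_cube)
    finally show "(K\<^sup>2 * r / 2 - 1)\<^sup>2 < 2 * (K^3 * r) * (K * r / 8)" .
  qed
qed

lemma pos_definite_minus_large:
  assumes "3 \<le> k"
  shows "pos_definite (A_minus k) (B_minus k) (C_minus k)"
proof -
  define K where "K = real k"
  have K: "3 \<le> K" using assms by (simp add: K_def)
  have "49 * K^3 * r \<le> 27 * r^k"
    using pow_ge_cube[OF r_ge _ assms] by (simp add: K_def)
  moreover have P: "0 \<le> K^3 * r" using K r_ge by simp
  ultimately have pow: "7/5 * (K^3 * r) \<le> r^k" by linarith
  have Kc: "2 * K \<le> K * c" "K * c \<le> K * r / 3"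
    using mult_left_mono[OF c_bounds(2), of K] mult_left_mono[of 2 c K] c_bounds(1) K by simp_all
  have KK: "0 \<le> K\<^sup>2 + K" using K by simp
  have Kd: "0 \<le> (K\<^sup>2 + K) * d" "(K\<^sup>2 + K) * d \<le> (K\<^sup>2 + K) * (r/2)"
    using d_bounds KK by (simp, intro mult_left_mono) auto
  show ?thesis
  proof (rule pos_definite_by_bounds)
    have "K * (3/4 * r) \<le> K * (c + 2 + d)"
      using K s_le by (intro mult_left_mono) (auto simp: c_eq d_eq field_simps)
    then show "3/4 * (K * r) \<le> A_minus k" using s_pos by (simp add: K_def add_increasing)
    have "0 \<le> (2 * K\<^sup>2 + K) * d" using d_bounds K by simp
    then show "7/5 * (K^3 * r) \<le> B_minus k"
      using pow Kc unfolding K_def[symmetric] by linarith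
    have "(K\<^sup>2 + K) * (r/2) = K\<^sup>2 * r / 2 + K * r / 2" by (simp add: algebra_simps)
    moreover have "3 * (K * r) \<le> K\<^sup>2 * r" "21 \<le> K * r"
      using K r_ge mult_mono[of 3 K 7 r] by (simp_all add: power2_eq_square mult_right_mono)
    ultimately show "\<bar>C_minus k\<bar> \<le> K\<^sup>2 * r"
      using Kc Kd K unfolding K_def[symmetric] abs_le_iff by (intro conjI; linarith)
    show "0 < 3/4 * (K * r)" "0 < 7/5 * (K^3 * r)" using K r_ge by simp_all
    have "(K\<^sup>2 * r)\<^sup>2 < 21/20 * (K\<^sup>2 * r)\<^sup>2" using K r_ge by simp
    also have "\<dots> = 3/4 * (K * r) * (7/5 * (K^3 * r))"
      by (simp add: power2_eq_square power3_eq_cube)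
    finally show "(K\<^sup>2 * r)\<^sup>2 < 3/4 * (K * r) * (7/5 * (K^3 * r))" .
  qed
qed

lemma pos_definite_plus_index:
  assumes "2 \<le> k"
  shows "pos_definite (A_plus k) (B_plus k) (C_plus k)"
proof -
  consider "k = 2" | "k = 3" | "4 \<le> k" using assms by linarith
  then show ?thesis
    using pos_definite_plus_2 pos_definite_plus_3 pos_definite_plus_large by cases auto
qed

lemma pos_definite_minus_index:
  assumes "1 \<le> k"
  shows "pos_definite (A_minus k) (B_minus k) (C_minus k)"
proof -
  consider "k = 1" | "k = 2" | "3 \<le> k" using assms by linarith
  then show ?thesis
    using pos_definite_minus_1 pos_definite_minus_2 pos_definite_minus_large by cases auto
qed

end

lemma rho_parameters:
  fixes \<rho> :: real
  assumes "sqrt 7 \<le> \<rho>"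
  shows "7 \<le> \<rho>\<^sup>2" "0 < inverse \<rho> ^ 2" "inverse \<rho> ^ 2 \<le> 1/7"
    "cc \<rho> = (\<rho>\<^sup>2 + 2 + inverse \<rho> ^ 2) / 4" "dd \<rho> = (\<rho>\<^sup>2 - 4 - inverse \<rho> ^ 2) / 2"
proof -
  have "0 < \<rho>" using assms real_sqrt_gt_zero[of 7] by linarith
  show r7: "7 \<le> \<rho>\<^sup>2" using power_mono[OF assms, of 2] by simp
  show "0 < inverse \<rho> ^ 2" using \<open>0 < \<rho>\<close> by simp
  have "inverse \<rho> ^ 2 = inverse (\<rho>\<^sup>2)" by (simp add: power_inverse)
  also have "\<dots> \<le> inverse 7" using r7 by (intro le_imp_inverse_le) auto
  finally show "inverse \<rho> ^ 2 \<le> 1/7" by simp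
  show "cc \<rho> = (\<rho>\<^sup>2 + 2 + inverse \<rho> ^ 2) / 4"
    using \<open>0 < \<rho>\<close> by (simp add: cc_def power2_eq_square algebra_simps)
  show "dd \<rho> = (\<rho>\<^sup>2 - 4 - inverse \<rho> ^ 2) / 2" by (simp add: dd_def)
qed

lemma powi_even:
  fixes \<rho> :: real
  shows "\<rho> powi (2 * int k) = (\<rho>\<^sup>2) ^ k" "\<rho> powi (- (2 * int k)) = (inverse \<rho> ^ 2) ^ k"
proof -
  show pos: "\<rho> powi (2 * int k) = (\<rho>\<^sup>2) ^ k"
    by (metis of_nat_mult of_nat_numeral power_int_of_nat power_mult)
  show "\<rho> powi (- (2 * int k)) = (inverse \<rho> ^ 2) ^ k"
    by (simp add: power_int_minus pos power_inverse)
qed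

lemma coeffs_nonneg_index:
  fixes \<rho> :: real
  shows "An \<rho> (int k) = (\<rho>\<^sup>2) ^ k - real k * cc \<rho> - 2 * real k - (2 * (real k)\<^sup>2 - real k) * dd \<rho>"
    "Bn \<rho> (int k) = (inverse \<rho> ^ 2) ^ k + real k * (dd \<rho> - cc \<rho> + 2)"
    "Cn \<rho> (int k) = 1 - real k * cc \<rho> - ((real k)\<^sup>2 - real k) * dd \<rho>"
  using powi_even[of \<rho> k]
  by (simp_all add: An_def Bn_def Cn_def algebra_simps power2_eq_square)

lemma coeffs_neg_index:
  fixes \<rho> :: real
  shows "An \<rho> (- int k) = (inverse \<rho> ^ 2) ^ k + real k * (cc \<rho> + 2 + dd \<rho>)"
    "Bn \<rho> (- int k) = (\<rho>\<^sup>2) ^ k + real k * cc \<rho> - 2 * real k + (2 * (real k)\<^sup>2 + real k) * dd \<rho>"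
    "Cn \<rho> (- int k) = 1 + real k * cc \<rho> + ((real k)\<^sup>2 + real k) * dd \<rho>"
  using powi_even[of \<rho> k]
  by (simp_all add: An_def Bn_def Cn_def algebra_simps power2_eq_square)

theorem lemma5p2:
  fixes \<rho> :: real and n :: int and \<xi> \<zeta> :: complex
  assumes "\<rho> \<ge> sqrt 7" and "n \<noteq> 0" and "n \<noteq> 1"
    and "\<not> (\<xi> = 0 \<and> \<zeta> = 0)"
  shows "Qn \<rho> n \<xi> \<zeta> > 0"
proof -
  note params = rho_parameters[OF assms(1)]
  have "pos_definite (An \<rho> n) (Bn \<rho> n) (Cn \<rho> n)"
  proof (cases "2 \<le> n")
    case True
    then obtain k where "n = int k" "2 \<le> k" by (intro that[of "nat n"]) auto
    then show ?thesis
      using pos_definite_plus_index[OF params] by (simp add: coeffs_nonneg_index)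
  next
    case False
    with assms(2,3) obtain k where "n = - int k" "1 \<le> k" by (intro that[of "nat (- n)"]) auto
    then show ?thesis
      using pos_definite_minus_index[OF params] by (simp add: coeffs_neg_index)
  qed
  then show ?thesis unfolding Qn_def using pos_definite_form_pos assms(4) by blast
qed

end
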